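(* Let $FD_{j,2}(\alpha,\lambda,n)$ be the number of partitions with perimeter $n$, largest part $\alpha$, exactly $\lambda$ parts, and exactly $j$ distinct part sizes appearing at least twice. Then, as formal power series, $$\sum_{\alpha,\lambda,n\geq 1}\sum_{j\geq 0} FD_{j,2}(\alpha,\lambda,n)\,x^\alpha y^\lambda z^j q^n=\frac{xyq\,(1-(1-z)yq)}{1-(x+y)q+(1-z)xy^2q^3}.$$
   Context: A partition is a finite nonincreasing sequence of positive integers (its parts); its size is not fixed. For a partition $\pi$ with largest part $\alpha(\pi)$ and number of parts $\lambda(\pi)$, its perimeter is $\alpha(\pi)+\lambda(\pi)-1$. (Note $FD_{j,2}(\alpha,\lambda,n)=0$ unless $n=\alpha+\lambda-1$.) *)

theory Defs
  imports "HOL-Computational_Algebra.Formal_Power_Series"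
begin

definition is_partition :: "nat list \<Rightarrow> bool" where
  "is_partition p \<longleftrightarrow> sorted_wrt (\<ge>) p \<and> (\<forall>k\<in>set p. 0 < k)"

definition largest_part :: "nat list \<Rightarrow> nat" where
  "largest_part p = Max (insert 0 (set p))"

definition num_parts :: "nat list \<Rightarrow> nat" where
  "num_parts p = length p"

definition perimeter :: "nat list \<Rightarrow> nat" where
  "perimeter p = largest_part p + num_parts p - 1"

definition repeated_sizes :: "nat list \<Rightarrow> nat" where
  "repeated_sizes p = card {k \<in> set p. 2 \<le> count_list p k}"

definition FD2 :: "nat \<Rightarrow> nat \<Rightarrow> nat \<Rightarrow> nat \<Rightarrow> nat" where
  "FD2 j a l n = card {p. is_partition p \<and> perimeter p = n \<and> largest_part p = a
                          \<and> num_parts p = l \<and> repeated_sizes p = j}"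

text \<open>Four-variable power series: outermost variable q, then x, y, z.\<close>
type_synonym fps4 = "int fps fps fps fps"

definition varQ :: fps4 where "varQ = fps_X"
definition varX :: fps4 where "varX = fps_const fps_X"
definition varY :: fps4 where "varY = fps_const (fps_const fps_X)"
definition varZ :: fps4 where "varZ = fps_const (fps_const (fps_const fps_X))"

definition FD2_gf :: fps4 where
  "FD2_gf = Abs_fps (\<lambda>n. Abs_fps (\<lambda>a. Abs_fps (\<lambda>l. Abs_fps (\<lambda>j.
     if 1 \<le> a \<and> 1 \<le> l \<and> 1 \<le> n then int (FD2 j a l n) else 0))))"

end

theory Submission
  imports Defs
begin

(*
  The perimeter of a partition is determined by its largest part a and its number of parts l,
  so the coefficient of q^n x^a y^l z^j in the generating function is the number c(a, l, j) of
  partitions with largest part a, l parts and j repeated sizes if n + 1 = a + l, and 0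
  otherwise; multiplying by a monomial q^(p+r) x^p y^r z^s therefore just shifts c. After
  multiplying out, the identity is the recurrence
    c(a, l, j) = c(a-1, l, j) + c(a, l-1, j) - c(a-1, l-2, j) + c(a-1, l-2, j-1)   (a >= 2).
  Partitions without a part 1 correspond, by lowering every part by 1, to those with largest
  part a - 1. Removing one part 1 maps the partitions containing 1 bijectively to all
  partitions with l - 1 parts; it lowers the number of repeated sizes exactly when 1 occurs
  twice, i.e. when the shorter partition is s @ [1] with s free of ones, and those s are
  counted by c(a-1, l-2, -).
*)

unbundle fps_syntax

lemma count_list_replicate: "count_list (replicate l k) x = (if k = x then l else 0)"
  by (induction l) auto

lemma inj_snoc: "inj (\<lambda>r. r @ [k])"
  by (rule injI) simp

lemma card_filter_split:
  assumes "finite A"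
  shows "card {x \<in> A. P x} = card {x \<in> A. P x \<and> Q x} + card {x \<in> A. P x \<and> \<not> Q x}"
proof -
  have "{x \<in> A. P x} = {x \<in> A. P x \<and> Q x} \<union> {x \<in> A. P x \<and> \<not> Q x}"
    by auto
  then show ?thesis
    using assms by (simp add: card_Un_disjoint[symmetric] disjoint_iff)
qed

definition partitions :: "nat \<Rightarrow> nat \<Rightarrow> nat list set" where
  "partitions a l = {p. is_partition p \<and> largest_part p = a \<and> length p = l}"

definition num_partitions :: "nat \<Rightarrow> nat \<Rightarrow> nat \<Rightarrow> nat" where
  "num_partitions a l j = card {p \<in> partitions a l. repeated_sizes p = j}"

lemma member_le_largest_part: "x \<in> set p \<Longrightarrow> x \<le> largest_part p"
  unfolding largest_part_def by simp

lemma largest_part_eq_Max: "p \<noteq> [] \<Longrightarrow> largest_part p = Max (set p)"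
  unfolding largest_part_def by (simp add: Max_insert)

lemma largest_part_map_Suc: "p \<noteq> [] \<Longrightarrow> largest_part (map Suc p) = Suc (largest_part p)"
  by (simp add: largest_part_eq_Max mono_Max_commute[symmetric] mono_Suc)

lemma largest_part_snoc: "largest_part (p @ [k]) = max k (largest_part p)"
  unfolding largest_part_def by (cases "p = []") auto

lemma finite_partitions: "finite (partitions a l)"
proof (rule finite_subset)
  show "partitions a l \<subseteq> {xs. set xs \<subseteq> {0..a} \<and> length xs = l}"
    unfolding partitions_def using member_le_largest_part by fastforce
  show "finite {xs. set xs \<subseteq> {0..a} \<and> length xs = l}"
    by (rule finite_lists_length_eq) simp
qed

lemma partitions_0_parts: "0 < a \<Longrightarrow> partitions a 0 = {}"
  by (auto simp: partitions_def largest_part_def)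

lemma partitions_largest_1:
  assumes "0 < l" shows "partitions 1 l = {replicate l 1}"
proof (intro equalityI subsetI)
  fix p assume "p \<in> partitions 1 l"
  then have "is_partition p" "largest_part p = 1" "length p = l"
    by (auto simp: partitions_def)
  have "x = 1" if "x \<in> set p" for x
    using that member_le_largest_part[OF that] \<open>is_partition p\<close> \<open>largest_part p = 1\<close>
    unfolding is_partition_def by fastforce
  then have "\<forall>x\<in>set p. x = 1" by blast
  with \<open>length p = l\<close> show "p \<in> {replicate l 1}"
    by (simp add: replicate_eqI)
next
  fix p assume "p \<in> {replicate l (1::nat)}"
  then show "p \<in> partitions 1 l"
    using assms by (auto simp: partitions_def is_partition_def largest_part_def sorted_wrt_iff_nth_less)
qed

lemma repeated_sizes_replicate:
  "repeated_sizes (replicate l k) = (if 2 \<le> l then 1 else 0)"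
proof -
  have "{x \<in> set (replicate l k). 2 \<le> count_list (replicate l k) x} = (if 2 \<le> l then {k} else {})"
    by (cases "l = 0") (auto simp: count_list_replicate)
  then show ?thesis
    unfolding repeated_sizes_def by simp
qed

lemma repeated_sizes_map_inj:
  assumes "inj f" shows "repeated_sizes (map f p) = repeated_sizes p"
proof -
  have "{x \<in> set (map f p). 2 \<le> count_list (map f p) x} = f ` {x \<in> set p. 2 \<le> count_list p x}"
    by (auto simp: count_list_map_conv[OF assms])
  then show ?thesis
    unfolding repeated_sizes_def by (simp add: card_image inj_on_subset[OF assms])
qed

lemma repeated_sizes_snoc:
  "repeated_sizes (p @ [k]) = repeated_sizes p + (if count_list p k = 1 then 1 else 0)"
proof -
  let ?R = "{x \<in> set p. 2 \<le> count_list p x}"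
  have in_set: "x \<in> set p" if "0 < count_list p x" for x
    using that count_list_0_iff[of p x] by linarith
  have count: "count_list (p @ [k]) x = count_list p x + (if k = x then 1 else 0)" for x
    by simp
  show ?thesis
  proof (cases "count_list p k = 1")
    case True
    then have "{x \<in> set (p @ [k]). 2 \<le> count_list (p @ [k]) x} = insert k ?R"
      unfolding count using in_set by auto
    moreover have "k \<notin> ?R"
      using True by simp
    ultimately show ?thesis
      using True unfolding repeated_sizes_def by simp
  next
    case False
    then have "{x \<in> set (p @ [k]). 2 \<le> count_list (p @ [k]) x} = ?R"
      unfolding count using in_set by (auto split: if_splits)
    then show ?thesis
      using False unfolding repeated_sizes_def by simp
  qed
qed

lemma partitions_Suc_without_one:
  assumes "0 < a"
  shows "{p \<in> partitions (Suc a) l. 1 \<notin> set p} = map Suc ` partitions a l"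
proof (intro equalityI subsetI)
  fix p assume "p \<in> {p \<in> partitions (Suc a) l. 1 \<notin> set p}"
  then have p: "is_partition p" "largest_part p = Suc a" "length p = l" "1 \<notin> set p"
    by (auto simp: partitions_def)
  have gt1: "1 < k" if "k \<in> set p" for k
  proof -
    have "0 < k" "k \<noteq> 1"
      using that p(1,4) unfolding is_partition_def by auto
    then show ?thesis by linarith
  qed
  define q where "q = map (\<lambda>k. k - 1) p"
  have pq: "p = map Suc q"
    unfolding q_def map_map by (rule map_idI[symmetric]) (use gt1 in force)
  have "q \<noteq> []"
    using p(2) by (auto simp: q_def largest_part_def)
  have "is_partition q"
    using p(1) gt1 unfolding pq is_partition_def by (auto simp: sorted_wrt_map)
  moreover have "largest_part q = a"
    using p(2) largest_part_map_Suc[OF \<open>q \<noteq> []\<close>] pq by simp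
  moreover have "length q = l"
    using p(3) by (simp add: q_def)
  ultimately show "p \<in> map Suc ` partitions a l"
    unfolding pq partitions_def by blast
next
  fix p assume "p \<in> map Suc ` partitions a l"
  then obtain q where pq: "p = map Suc q" and q: "is_partition q" "largest_part q = a" "length q = l"
    by (auto simp: partitions_def)
  have "q \<noteq> []"
    using q(2) assms by (auto simp: largest_part_def)
  then show "p \<in> {p \<in> partitions (Suc a) l. 1 \<notin> set p}"
    using q largest_part_map_Suc[of q] unfolding pq partitions_def is_partition_def
    by (auto simp: sorted_wrt_map)
qed

lemma last_partition_with_one:
  assumes "is_partition p" "1 \<in> set p"
  shows "p = butlast p @ [1]"
proof -
  have "p \<noteq> []"
    using assms(2) by auto
  then have p: "p = butlast p @ [last p]"
    by simp
  have "last p \<le> x" if "x \<in> set (butlast p)" for x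
    using assms(1) that sorted_wrt_append[of "(\<ge>)" "butlast p" "[last p]"]
    unfolding is_partition_def by (simp flip: p)
  moreover have "0 < last p"
    using assms(1) \<open>p \<noteq> []\<close> unfolding is_partition_def by simp
  moreover have "1 \<in> set (butlast p) \<or> last p = 1"
    using assms(2) by (subst (asm) p) auto
  ultimately have "last p = 1"
    by fastforce
  with p show ?thesis
    by simp
qed

lemma partitions_Suc_with_one:
  assumes "1 < a"
  shows "{p \<in> partitions a (Suc l). 1 \<in> set p} = (\<lambda>r. r @ [1]) ` partitions a l"
proof (intro equalityI subsetI)
  fix p assume "p \<in> {p \<in> partitions a (Suc l). 1 \<in> set p}"
  then have p: "is_partition p" "largest_part p = a" "length p = Suc l" "1 \<in> set p"
    by (auto simp: partitions_def)
  define r where "r = butlast p"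
  have pr: "p = r @ [1]"
    unfolding r_def using last_partition_with_one[OF p(1,4)] .
  have "is_partition r"
    using p(1) unfolding pr is_partition_def by (simp add: sorted_wrt_append)
  moreover have "largest_part r = a"
    using p(2) assms unfolding pr largest_part_snoc by (simp add: max_def split: if_splits)
  moreover have "length r = l"
    using p(3) by (simp add: pr)
  ultimately show "p \<in> (\<lambda>r. r @ [1]) ` partitions a l"
    unfolding pr partitions_def by blast
next
  fix p assume "p \<in> (\<lambda>r. r @ [1]) ` partitions a l"
  then obtain r where pr: "p = r @ [1]" and r: "is_partition r" "largest_part r = a" "length r = l"
    by (auto simp: partitions_def)
  then show "p \<in> {p \<in> partitions a (Suc l). 1 \<in> set p}"
    using assms unfolding pr partitions_def is_partition_def
    by (auto simp: sorted_wrt_append largest_part_snoc)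
qed

lemma card_partitions_without_one:
  assumes "0 < a"
  shows "card {p \<in> partitions (Suc a) l. 1 \<notin> set p \<and> repeated_sizes p = j}
       = num_partitions a l j"
proof -
  have "{p \<in> partitions (Suc a) l. 1 \<notin> set p \<and> repeated_sizes p = j}
      = {p \<in> map Suc ` partitions a l. repeated_sizes p = j}"
    unfolding partitions_Suc_without_one[OF assms, symmetric] by auto
  also have "\<dots> = map Suc ` {q \<in> partitions a l. repeated_sizes q = j}"
    by (auto simp: repeated_sizes_map_inj[OF inj_Suc])
  finally show ?thesis
    unfolding num_partitions_def by (simp add: card_image inj_on_subset[OF inj_mapI[OF inj_Suc]])
qed

lemma card_partitions_with_one:
  assumes "1 < a"
  shows "card {p \<in> partitions a (Suc l). 1 \<in> set p \<and> repeated_sizes p = j}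
       = card {r \<in> partitions a l. repeated_sizes (r @ [1]) = j}"
proof -
  have "{p \<in> partitions a (Suc l). 1 \<in> set p \<and> repeated_sizes p = j}
      = {p \<in> {p \<in> partitions a (Suc l). 1 \<in> set p}. repeated_sizes p = j}"
    by auto
  also have "\<dots> = (\<lambda>r. r @ [1]) ` {r \<in> partitions a l. repeated_sizes (r @ [1]) = j}"
    unfolding partitions_Suc_with_one[OF assms] by auto
  finally show ?thesis
    by (simp add: card_image inj_on_subset[OF inj_snoc])
qed

lemma card_partitions_single_one:
  assumes "1 < a"
  shows "card {r \<in> partitions a l. count_list r 1 = 1 \<and> repeated_sizes r = j}
       = num_partitions (a - 1) (l - 1) j"
proof (cases l)
  case 0
  then show ?thesis
    using assms by (simp add: partitions_0_parts num_partitions_def)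
next
  case (Suc l')
  have "{r \<in> partitions a l. count_list r 1 = 1 \<and> repeated_sizes r = j}
      = {r \<in> {r \<in> partitions a (Suc l'). 1 \<in> set r}. count_list r 1 = 1 \<and> repeated_sizes r = j}"
    using Suc count_list_0_iff[of _ 1] by (auto intro: ccontr)
  also have "\<dots> = (\<lambda>s. s @ [1]) ` {s \<in> partitions a l'.
      count_list (s @ [1]) 1 = 1 \<and> repeated_sizes (s @ [1]) = j}"
    unfolding partitions_Suc_with_one[OF assms] by auto
  also have "\<dots> = (\<lambda>s. s @ [1]) ` {s \<in> partitions a l'. 1 \<notin> set s \<and> repeated_sizes s = j}"
  proof -
    have "count_list (s @ [1]) 1 = 1 \<longleftrightarrow> 1 \<notin> set s" for s :: "nat list"
      by (simp add: count_list_0_iff)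
    moreover have "repeated_sizes (s @ [1]) = repeated_sizes s" if "1 \<notin> set s" for s
      using that by (simp add: repeated_sizes_snoc count_list_0_iff)
    ultimately show ?thesis
      by (metis (no_types, lifting))
  qed
  finally show ?thesis
    using card_partitions_without_one[of "a - 1" l' j] assms Suc
    by (simp add: card_image inj_on_subset[OF inj_snoc])
qed

lemma num_partitions_Suc_parts:
  assumes "1 < a"
  shows "int (num_partitions a (Suc l) j)
       = int (num_partitions (a - 1) (Suc l) j) + int (num_partitions a l j)
         - int (num_partitions (a - 1) (l - 1) j)
         + (if 0 < j then int (num_partitions (a - 1) (l - 1) (j - 1)) else 0)"
proof -
  let ?single = "\<lambda>j. card {r \<in> partitions a l. count_list r 1 = 1 \<and> repeated_sizes r = j}"
  let ?multiple = "card {r \<in> partitions a l. repeated_sizes r = j \<and> count_list r 1 \<noteq> 1}"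
  have "num_partitions a (Suc l) j
      = card {p \<in> partitions a (Suc l). 1 \<in> set p \<and> repeated_sizes p = j}
        + card {p \<in> partitions a (Suc l). 1 \<notin> set p \<and> repeated_sizes p = j}"
    unfolding num_partitions_def
    by (subst card_filter_split[OF finite_partitions, where Q = "\<lambda>p. 1 \<in> set p"]) (simp add: conj_commute)
  also have "\<dots> = card {r \<in> partitions a l. repeated_sizes (r @ [1]) = j}
      + num_partitions (a - 1) (Suc l) j"
    using assms card_partitions_with_one card_partitions_without_one[of "a - 1"] by simp
  also have "card {r \<in> partitions a l. repeated_sizes (r @ [1]) = j}
      = card {r \<in> partitions a l. repeated_sizes (r @ [1]) = j \<and> count_list r 1 = 1}
        + card {r \<in> partitions a l. repeated_sizes (r @ [1]) = j \<and> count_list r 1 \<noteq> 1}"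
    by (rule card_filter_split[OF finite_partitions])
  also have "{r \<in> partitions a l. repeated_sizes (r @ [1]) = j \<and> count_list r 1 = 1}
      = (if 0 < j then {r \<in> partitions a l. count_list r 1 = 1 \<and> repeated_sizes r = j - 1} else {})"
    by (auto simp: repeated_sizes_snoc)
  also have "{r \<in> partitions a l. repeated_sizes (r @ [1]) = j \<and> count_list r 1 \<noteq> 1}
      = {r \<in> partitions a l. repeated_sizes r = j \<and> count_list r 1 \<noteq> 1}"
    by (auto simp: repeated_sizes_snoc)
  finally have with_one: "num_partitions a (Suc l) j
      = (if 0 < j then ?single (j - 1) else 0) + ?multiple + num_partitions (a - 1) (Suc l) j"
    by simp
  have "num_partitions a l j = ?single j + ?multiple"
    unfolding num_partitions_def
    by (subst card_filter_split[OF finite_partitions, where Q = "\<lambda>r. count_list r 1 = 1"])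
      (simp add: conj_commute)
  with with_one show ?thesis
    using card_partitions_single_one[OF assms] by simp
qed

lemma num_partitions_largest_1:
  assumes "0 < l"
  shows "num_partitions 1 l j = of_bool (j = of_bool (2 \<le> l))"
  unfolding num_partitions_def partitions_largest_1[OF assms]
  by (simp add: repeated_sizes_replicate Collect_conv_if)

(* The empty partition is excluded, as it is from FD2_gf. *)
definition partition_number :: "nat \<Rightarrow> nat \<Rightarrow> nat \<Rightarrow> int" where
  "partition_number a l j = (if a = 0 then 0 else int (num_partitions a l j))"

lemma partition_number_eq_0: "a = 0 \<or> l = 0 \<Longrightarrow> partition_number a l j = 0"
  by (auto simp: partition_number_def num_partitions_def partitions_0_parts)

lemma partition_number_largest_1:
  "partition_number 1 l j = of_bool (0 < l \<and> j = of_bool (2 \<le> l))"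
proof (cases "l = 0")
  case True
  then show ?thesis
    by (simp add: partition_number_eq_0)
next
  case False
  then show ?thesis
    using num_partitions_largest_1[of l j] by (simp add: partition_number_def)
qed

lemma partition_number_rec:
  "partition_number a l j
     = partition_number (a - 1) l j + partition_number a (l - 1) j
       - partition_number (a - 1) (l - 2) j
       + (if 0 < j then partition_number (a - 1) (l - 2) (j - 1) else 0)
       + of_bool (a = 1 \<and> l = 1 \<and> j = 0) - of_bool (a = 1 \<and> l = 2 \<and> j = 0)
       + of_bool (a = 1 \<and> l = 2 \<and> j = 1)"
proof -
  consider "a = 0 \<or> l = 0" | "a = 1" "0 < l" | "1 < a" "0 < l"
    by linarith
  then show ?thesis
  proof cases
    case 1
    then show ?thesis
      by (auto simp: partition_number_eq_0)
  next
    case 2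
    then show ?thesis
      using partition_number_largest_1[of l j] partition_number_largest_1[of "l - 1" j]
      by (auto simp: partition_number_eq_0)
  next
    case 3
    then obtain l' where "l = Suc l'"
      using gr0_implies_Suc by blast
    with 3 show ?thesis
      using num_partitions_Suc_parts[of a l' j]
      by (simp add: partition_number_def)
  qed
qed

lemma FD2_eq_num_partitions:
  "FD2 j a l n = (if n = a + l - 1 then num_partitions a l j else 0)"
proof -
  have "{p. is_partition p \<and> perimeter p = n \<and> largest_part p = a \<and> num_parts p = l
            \<and> repeated_sizes p = j}
      = (if n = a + l - 1 then {p \<in> partitions a l. repeated_sizes p = j} else {})"
    by (auto simp: partitions_def perimeter_def num_parts_def)
  then show ?thesis
    unfolding FD2_def num_partitions_def by simp
qed

lemma FD2_gf_nth:
  "FD2_gf $ n $ a $ l $ j = (if n + 1 = a + l then partition_number a l j else 0)"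
proof (cases "a = 0 \<or> l = 0")
  case True
  then show ?thesis
    by (auto simp: FD2_gf_def partition_number_eq_0)
next
  case False
  then show ?thesis
    by (auto simp: FD2_gf_def FD2_eq_num_partitions partition_number_def)
qed

definition monomial4 :: "nat \<Rightarrow> nat \<Rightarrow> nat \<Rightarrow> nat \<Rightarrow> fps4" where
  "monomial4 k p r s = varQ ^ k * varX ^ p * varY ^ r * varZ ^ s"

lemma monomial4_mult_nth:
  "(monomial4 k p r s * f) $ n $ a $ l $ j
     = (if k \<le> n \<and> p \<le> a \<and> r \<le> l \<and> s \<le> j
        then f $ (n - k) $ (a - p) $ (l - r) $ (j - s) else 0)"
  unfolding monomial4_def varQ_def varX_def varY_def varZ_def
  by (simp add: mult.assoc fps_X_power_mult_nth)

lemma monomial4_nth: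
  "monomial4 k p r s $ n $ a $ l $ j = of_bool (n = k \<and> a = p \<and> l = r \<and> j = s)"
  using monomial4_mult_nth[where f = 1] by auto

lemma monomial4_mult_FD2_gf_nth:
  assumes "k = p + r"
  shows "(monomial4 k p r s * FD2_gf) $ n $ a $ l $ j
     = (if n + 1 = a + l \<and> s \<le> j then partition_number (a - p) (l - r) (j - s) else 0)"
proof -
  have "a - p = 0 \<or> l - r = 0" if "n + 1 = a + l" "\<not> p + r \<le> n"
    using that by arith
  with assms show ?thesis
    by (auto simp: monomial4_mult_nth FD2_gf_nth partition_number_eq_0)
qed

lemma mult_denominator_eq_monomial4:
  "f * (1 - (varX + varY) * varQ + (1 - varZ) * varX * varY ^ 2 * varQ ^ 3)
     = monomial4 0 0 0 0 * f - monomial4 1 1 0 0 * f - monomial4 1 0 1 0 * f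
       + monomial4 3 1 2 0 * f - monomial4 3 1 2 1 * f"
  by (simp add: monomial4_def algebra_simps power2_eq_square power3_eq_cube)

lemma numerator_eq_monomial4:
  "varX * varY * varQ * (1 - (1 - varZ) * varY * varQ)
     = monomial4 1 1 1 0 - monomial4 2 1 2 0 + monomial4 2 1 2 1"
  by (simp add: monomial4_def algebra_simps power2_eq_square)

theorem mainTheorem2:
  shows "FD2_gf * (1 - (varX + varY) * varQ + (1 - varZ) * varX * varY ^ 2 * varQ ^ 3)
         = varX * varY * varQ * (1 - (1 - varZ) * varY * varQ)"
proof (intro fps_ext)
  fix n a l j
  show "(FD2_gf * (1 - (varX + varY) * varQ + (1 - varZ) * varX * varY ^ 2 * varQ ^ 3)) $ n $ a $ l $ j
      = (varX * varY * varQ * (1 - (1 - varZ) * varY * varQ)) $ n $ a $ l $ j"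
    unfolding mult_denominator_eq_monomial4 numerator_eq_monomial4
    using partition_number_rec[of a l j] by (auto simp: monomial4_mult_FD2_gf_nth monomial4_nth)
qed

end
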